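(* Let $(G,J)$ be a non-abelian complex Lie group with Lie algebra $(\mathfrak g,\mu)$. If $(G,J)$ admits a left-invariant static metric, then $\mu(\mathfrak g,\mathfrak g)=\mathfrak g$. In particular, if $G$ is (non-abelian and) solvable, it admits no left-invariant static metric.
   Context: A complex Lie group $(G,J)$ is a real Lie group with bi-invariant complex structure $J$; $\mathfrak g^{1,0}=\{X\in\mathfrak g\otimes\mathbb C:JX=iX\}$. For a left-invariant Hermitian metric $g$ the torsion-twisted Chern–Ricci tensor is given, for a left-invariant holomorphic frame $Z_1,\dots,Z_n$ of $\mathfrak g^{1,0}$, by $\Theta(g)(Z_i,\bar Z_j)=\tfrac12 g^{k\bar l}g^{r\bar s}\,g(Z_i,\mu(\bar Z_l,\bar Z_s))\,g(\mu(Z_k,Z_r),\bar Z_j)$ (summation convention, $g$ extended complex-bilinearly). A Hermitian metric $g$ is static (for the positive Hermitian curvature flow) if $\Theta(g)=\lambda g$ for some $\lambda\in\mathbb R$. *)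

theory Defs
  imports "HOL-Analysis.Analysis"
begin

text \<open>
  The holomorphic tangent space g^{1,0} of the complex Lie group (G,J) is identified
  with complex^'n via a left-invariant holomorphic frame Z_1..Z_n (Z_i = axis i 1).
  Because J is bi-invariant, g^{1,0} is a complex Lie subalgebra of g (x) C, isomorphic to the
  complex Lie algebra (g,J). Its bracket is given by structure constants
  mu(Z_i,Z_j) = c i j, extended complex-bilinearly.
\<close>

definition lie_br :: "('n::finite \<Rightarrow> 'n \<Rightarrow> complex^'n) \<Rightarrow> complex^'n \<Rightarrow> complex^'n \<Rightarrow> complex^'n" where
  "lie_br c x y = (\<Sum>i\<in>UNIV. \<Sum>j\<in>UNIV. (x$i * y$j) *s c i j)"

definition is_lie_algebra :: "('n::finite \<Rightarrow> 'n \<Rightarrow> complex^'n) \<Rightarrow> bool" where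
  "is_lie_algebra c \<longleftrightarrow>
     (\<forall>x. lie_br c x x = 0) \<and>
     (\<forall>x y z. lie_br c x (lie_br c y z) + lie_br c y (lie_br c z x) + lie_br c z (lie_br c x y) = 0)"

definition abelian :: "('n::finite \<Rightarrow> 'n \<Rightarrow> complex^'n) \<Rightarrow> bool" where
  "abelian c \<longleftrightarrow> (\<forall>x y. lie_br c x y = 0)"

fun derived_series :: "('n::finite \<Rightarrow> 'n \<Rightarrow> complex^'n) \<Rightarrow> nat \<Rightarrow> (complex^'n) set" where
  "derived_series c 0 = UNIV"
| "derived_series c (Suc k) =
     vec.span {lie_br c x y | x y. x \<in> derived_series c k \<and> y \<in> derived_series c k}"

definition solvable_lie :: "('n::finite \<Rightarrow> 'n \<Rightarrow> complex^'n) \<Rightarrow> bool" where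
  "solvable_lie c \<longleftrightarrow> (\<exists>k. derived_series c k = {0})"

text \<open>Hermitian metric: h$i$j = g(Z_i, conj Z_j). g(X, conj Y) for X, Y in g^{1,0}.\<close>
definition hform :: "complex^'n^'n \<Rightarrow> complex^'n \<Rightarrow> complex^'n \<Rightarrow> complex" where
  "hform h x y = (\<Sum>i\<in>UNIV. \<Sum>j\<in>UNIV. x$i * cnj (y$j) * h$i$j)"

definition hermitian_metric :: "complex^'n^'n \<Rightarrow> bool" where
  "hermitian_metric h \<longleftrightarrow>
     (\<forall>i j. h$j$i = cnj (h$i$j)) \<and>
     (\<forall>v. v \<noteq> 0 \<longrightarrow> Im (hform h v v) = 0 \<and> Re (hform h v v) > 0)"

text \<open>Inverse metric g^{k conj l}, normalised by sum_l g^{k conj l} g_{j conj l} = delta_{kj}.\<close>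
definition inv_metric :: "complex^'n^'n \<Rightarrow> complex^'n^'n" where
  "inv_metric h = matrix_inv (transpose h)"

text \<open>Theta(g)(Z_i, conj Z_j) =
  1/2 g^{k conj l} g^{r conj s} g(Z_i, mu(conj Z_l, conj Z_s)) g(mu(Z_k,Z_r), conj Z_j),
  where mu(conj Z_l, conj Z_s) = conj(mu(Z_l,Z_s)), so that
  g(Z_i, mu(conj Z_l, conj Z_s)) = hform h (Z_i) (c l s).\<close>
definition Theta :: "('n::finite \<Rightarrow> 'n \<Rightarrow> complex^'n) \<Rightarrow> complex^'n^'n \<Rightarrow> 'n \<Rightarrow> 'n \<Rightarrow> complex" where
  "Theta c h i j = (1/2) * (\<Sum>k\<in>UNIV. \<Sum>l\<in>UNIV. \<Sum>r\<in>UNIV. \<Sum>s\<in>UNIV.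
      (inv_metric h)$k$l * (inv_metric h)$r$s *
      hform h (axis i 1) (c l s) * hform h (c k r) (axis j 1))"

definition static_metric :: "('n::finite \<Rightarrow> 'n \<Rightarrow> complex^'n) \<Rightarrow> complex^'n^'n \<Rightarrow> bool" where
  "static_metric c h \<longleftrightarrow> hermitian_metric h \<and>
     (\<exists>lam::real. \<forall>i j. Theta c h i j = complex_of_real lam * h$i$j)"

end

theory Submission
  imports Defs
begin

text \<open>
  Contracting \<open>\<Theta>\<close> with \<open>w \<otimes> conj w\<close> gives half the squared norm, with respect to
  \<open>g\<^sup>-\<^sup>1 \<otimes> g\<^sup>-\<^sup>1\<close>, of the tensor \<open>(Z\<^sub>k, Z\<^sub>r) \<mapsto> g(\<mu>(Z\<^sub>k, Z\<^sub>r), conj w)\<close>; that this norm is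
  positive definite follows from a Cholesky factorisation of \<open>g\<^sup>-\<^sup>1\<close>.
  If the brackets do not span, take \<open>w \<noteq> 0\<close> orthogonal to all of them: then \<open>\<Theta>(w, conj w) = 0\<close>,
  so the static constant \<open>\<lambda>\<close> is \<open>0\<close> and \<open>\<Theta>\<close> vanishes identically. Positivity then forces
  \<open>g(\<mu>(Z\<^sub>k, Z\<^sub>r), conj w) = 0\<close> for every \<open>w\<close>, i.e. \<open>\<mu> = 0\<close>.
  If \<open>\<mu>(g, g) = g\<close> the derived series is constant, so \<open>g\<close> is not solvable.
\<close>

definition pos_def_hermitian_on :: "'k set \<Rightarrow> ('k \<Rightarrow> 'k \<Rightarrow> complex) \<Rightarrow> bool" where
  "pos_def_hermitian_on K G \<longleftrightarrow>
     (\<forall>k\<in>K. \<forall>l\<in>K. G l k = cnj (G k l)) \<and>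
     (\<forall>x. (\<exists>k\<in>K. x k \<noteq> 0) \<longrightarrow> Re (\<Sum>k\<in>K. \<Sum>l\<in>K. x k * cnj (x l) * G k l) > 0)"

lemma pos_def_hermitian_on_diag:
  assumes "finite K" "pos_def_hermitian_on K G" "k \<in> K"
  shows "G k k = of_real (Re (G k k))" "Re (G k k) > 0"
proof -
  show "G k k = of_real (Re (G k k))"
    using assms(2,3) unfolding pos_def_hermitian_on_def by (metis Reals_cnj_iff of_real_Re)
  define e where "e i = (if i = k then 1 else 0 :: complex)" for i
  have "(\<Sum>i\<in>K. \<Sum>j\<in>K. e i * cnj (e j) * G i j) = G k k"
  proof -
    have "e i * cnj (e j) * G i j = (if j = k then if i = k then G k k else 0 else 0)" for i j
      by (simp add: e_def)
    then show ?thesis using assms(1,3) by (simp only: sum.delta if_True)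
  qed
  moreover have "\<exists>i\<in>K. e i \<noteq> 0"
    using assms(3) by (auto simp: e_def)
  ultimately show "Re (G k k) > 0"
    using assms(2) unfolding pos_def_hermitian_on_def by (metis (no_types, lifting))
qed

lemma hermitian_form_complete_square:
  fixes G :: "'k \<Rightarrow> 'k \<Rightarrow> complex" and x :: "'k \<Rightarrow> complex"
  assumes "finite K" "k0 \<notin> K"
    and herm: "\<And>l. l \<in> K \<Longrightarrow> G k0 l = cnj (G l k0)" and real: "cnj (G k0 k0) = G k0 k0"
  defines "y \<equiv> x(k0 := - (\<Sum>k\<in>K. x k * G k k0) / G k0 k0)"
  shows "(\<Sum>k\<in>insert k0 K. \<Sum>l\<in>insert k0 K. y k * cnj (y l) * G k l)
    = (\<Sum>k\<in>K. \<Sum>l\<in>K. x k * cnj (x l) * (G k l - G k k0 * G k0 l / G k0 k0))"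
proof -
  define g where "g = G k0 k0"
  define u where "u = (\<Sum>k\<in>K. x k * G k k0)"
  have cnj_u: "cnj u = (\<Sum>l\<in>K. cnj (x l) * G k0 l)"
    unfolding u_def cnj_sum complex_cnj_mult by (intro sum.cong refl) (simp add: herm)
  have y_K: "y k = x k" if "k \<in> K" for k
    using that assms(2) by (auto simp: y_def)
  have "(\<Sum>k\<in>insert k0 K. \<Sum>l\<in>insert k0 K. y k * cnj (y l) * G k l)
      = y k0 * cnj (y k0) * g + (\<Sum>l\<in>K. y k0 * cnj (y l) * G k0 l)
        + (\<Sum>k\<in>K. y k * cnj (y k0) * G k k0) + (\<Sum>k\<in>K. \<Sum>l\<in>K. y k * cnj (y l) * G k l)"
    using assms(1,2) by (simp add: g_def sum.distrib)
  also have "\<dots> = g * y k0 * cnj (y k0) + y k0 * cnj u + cnj (y k0) * u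
        + (\<Sum>k\<in>K. \<Sum>l\<in>K. x k * cnj (x l) * G k l)"
  proof -
    have "(\<Sum>l\<in>K. y k0 * cnj (y l) * G k0 l) = y k0 * cnj u"
      by (simp add: cnj_u y_K sum_distrib_left mult_ac)
    moreover have "(\<Sum>k\<in>K. y k * cnj (y k0) * G k k0) = cnj (y k0) * u"
      by (simp add: u_def y_K sum_distrib_left mult_ac)
    moreover have "(\<Sum>k\<in>K. \<Sum>l\<in>K. y k * cnj (y l) * G k l) = (\<Sum>k\<in>K. \<Sum>l\<in>K. x k * cnj (x l) * G k l)"
      by (simp add: y_K)
    ultimately show ?thesis by (simp add: mult_ac)
  qed
  also have "\<dots> = (\<Sum>k\<in>K. \<Sum>l\<in>K. x k * cnj (x l) * G k l) - u * cnj u / g"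
    using real by (cases "g = 0") (simp_all add: y_def u_def g_def field_simps)
  also have "u * cnj u / g = (\<Sum>k\<in>K. \<Sum>l\<in>K. x k * cnj (x l) * (G k k0 * G k0 l / g))"
    unfolding cnj_u by (simp add: u_def sum_product sum_divide_distrib mult_ac)
  finally show ?thesis
    by (simp add: g_def right_diff_distrib sum_subtractf)
qed

lemma pos_def_hermitian_on_schur_complement:
  assumes "finite K" "k0 \<notin> K" and pd: "pos_def_hermitian_on (insert k0 K) G"
  shows "pos_def_hermitian_on K (\<lambda>k l. G k l - G k k0 * G k0 l / G k0 k0)"
  unfolding pos_def_hermitian_on_def
proof (intro conjI ballI allI impI)
  have herm: "G l k = cnj (G k l)" if "k \<in> insert k0 K" "l \<in> insert k0 K" for k l
    using pd that unfolding pos_def_hermitian_on_def by blast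
  fix k l assume "k \<in> K" "l \<in> K"
  then have "cnj (G k l) = G l k" "cnj (G k k0) = G k0 k" "cnj (G k0 l) = G l k0" "cnj (G k0 k0) = G k0 k0"
    using herm by (metis complex_cnj_cnj insert_iff)+
  then show "G l k - G l k0 * G k0 k / G k0 k0 = cnj (G k l - G k k0 * G k0 l / G k0 k0)"
    by (simp add: mult.commute)
next
  fix x :: "'a \<Rightarrow> complex" assume "\<exists>k\<in>K. x k \<noteq> 0"
  define y where "y = x(k0 := - (\<Sum>k\<in>K. x k * G k k0) / G k0 k0)"
  have "\<exists>k\<in>insert k0 K. y k \<noteq> 0"
    using \<open>\<exists>k\<in>K. x k \<noteq> 0\<close> assms(2) by (auto simp: y_def)
  then have pos_y: "Re (\<Sum>k\<in>insert k0 K. \<Sum>l\<in>insert k0 K. y k * cnj (y l) * G k l) > 0"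
    using pd unfolding pos_def_hermitian_on_def by blast
  have herm_k0: "G k0 l = cnj (G l k0)" if "l \<in> K" for l
    using pd that unfolding pos_def_hermitian_on_def by blast
  have real_k0: "cnj (G k0 k0) = G k0 k0"
    using pd unfolding pos_def_hermitian_on_def by (metis complex_cnj_cnj insertI1)
  have "(\<Sum>k\<in>insert k0 K. \<Sum>l\<in>insert k0 K. y k * cnj (y l) * G k l)
      = (\<Sum>k\<in>K. \<Sum>l\<in>K. x k * cnj (x l) * (G k l - G k k0 * G k0 l / G k0 k0))"
    unfolding y_def using herm_k0 real_k0 by (rule hermitian_form_complete_square[OF assms(1,2)])
  then show "Re (\<Sum>k\<in>K. \<Sum>l\<in>K. x k * cnj (x l) * (G k l - G k k0 * G k0 l / G k0 k0)) > 0"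
    using pos_y by (simp only:)
qed

lemma pos_def_hermitian_on_factorization:
  assumes "finite K" "pos_def_hermitian_on K G"
  shows "\<exists>L. \<forall>k\<in>K. \<forall>l\<in>K. G k l = (\<Sum>m\<in>K. L k m * cnj (L l m))"
  using assms
proof (induction K arbitrary: G rule: finite_induct)
  case empty
  then show ?case by simp
next
  case (insert k0 K G)
  define g where "g = G k0 k0"
  have g_real: "g = of_real (Re g)" and g_pos: "Re g > 0"
    using pos_def_hermitian_on_diag[OF _ insert.prems] insert.hyps(1) by (auto simp: g_def)
  have herm: "G k0 l = cnj (G l k0)" if "l \<in> insert k0 K" for l
    using insert.prems that unfolding pos_def_hermitian_on_def by blast
  obtain L' where L': "\<forall>k\<in>K. \<forall>l\<in>K. G k l - G k k0 * G k0 l / g = (\<Sum>m\<in>K. L' k m * cnj (L' l m))"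
    using insert.IH pos_def_hermitian_on_schur_complement[OF insert.hyps insert.prems]
    unfolding g_def by blast
  define r :: complex where "r = of_real (sqrt (Re g))"
  have r_sq: "r * cnj r = g"
    using g_pos g_real by (simp add: r_def flip: of_real_mult)
  \<comment> \<open>Column \<open>k0\<close> is \<open>G(-, k0) / \<surd>g\<close>; the remaining columns factor the Schur complement.\<close>
  define L where "L k m = (if m = k0 then G k k0 / r else if k = k0 then 0 else L' k m)" for k m
  have "G k l = (\<Sum>m\<in>insert k0 K. L k m * cnj (L l m))"
    if k: "k \<in> insert k0 K" and l: "l \<in> insert k0 K" for k l
  proof -
    have "L k k0 * cnj (L l k0) = G k k0 * G k0 l / g"
      using herm[OF l] r_sq by (simp add: L_def field_simps)
    moreover have "(\<Sum>m\<in>K. L k m * cnj (L l m)) = (if k = k0 \<or> l = k0 then 0 else G k l - G k k0 * G k0 l / g)"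
    proof -
      have "(\<Sum>m\<in>K. L k m * cnj (L l m)) = (\<Sum>m\<in>K. if k = k0 \<or> l = k0 then 0 else L' k m * cnj (L' l m))"
        using insert.hyps(2) by (intro sum.cong) (auto simp: L_def)
      then show ?thesis using L' k l by auto
    qed
    ultimately show ?thesis
      using insert.hyps g_real g_pos k l by (auto simp: g_def)
  qed
  then show ?case by blast
qed

lemma matrix_inv_inverse:
  fixes A :: "'a::field^'n^'n"
  assumes "invertible A"
  shows "A ** matrix_inv A = mat 1" "matrix_inv A ** A = mat 1"
proof -
  have "A ** matrix_inv A = mat 1 \<and> matrix_inv A ** A = mat 1"
    using assms unfolding invertible_def matrix_inv_def by (rule someI_ex)
  then show "A ** matrix_inv A = mat 1" "matrix_inv A ** A = mat 1" by auto
qed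

lemma invertible_transpose:
  fixes A :: "'a::field^'n^'n"
  assumes "invertible A"
  shows "invertible (transpose A)"
proof -
  obtain B where "A ** B = mat 1"
    using assms invertible_right_inverse by blast
  then have "transpose B ** transpose A = mat 1"
    by (metis matrix_transpose_mul transpose_mat)
  then show ?thesis
    using invertible_left_inverse by blast
qed

definition vec_cnj :: "complex^'n \<Rightarrow> complex^'n" where
  "vec_cnj z = (\<chi> i. cnj (z$i))"

lemma vec_cnj_nth [simp]: "vec_cnj z $ i = cnj (z $ i)"
  by (simp add: vec_cnj_def)

lemma vec_cnj_vec_cnj [simp]: "vec_cnj (vec_cnj z) = z"
  by (simp add: vec_eq_iff)

lemma vec_cnj_eq_0_iff [simp]: "vec_cnj z = 0 \<longleftrightarrow> z = 0"
  by (simp add: vec_eq_iff)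

lemma hform_eq_sum_matrix_vector_mult: "hform h x y = (\<Sum>i\<in>UNIV. x$i * (h *v vec_cnj y)$i)"
  unfolding hform_def matrix_vector_mult_def by (simp add: sum_distrib_left mult_ac)

lemma hform_eq_sum_vector_matrix_mult: "hform h x y = (\<Sum>j\<in>UNIV. (x v* h)$j * cnj (y$j))"
  unfolding hform_def vector_matrix_mult_def
  by (subst sum.swap) (simp add: sum_distrib_left mult_ac)

lemma hermitian_metric_cnj:
  assumes "hermitian_metric h"
  shows "cnj (h$i$j) = h$j$i"
proof -
  have "h$i$j = cnj (h$j$i)"
    using assms unfolding hermitian_metric_def by blast
  then show ?thesis by simp
qed

lemma hform_cnj_commute:
  assumes "hermitian_metric h"
  shows "cnj (hform h x y) = hform h y x"
proof -
  have "cnj (hform h x y) = (\<Sum>i\<in>UNIV. \<Sum>j\<in>UNIV. y$j * cnj (x$i) * h$j$i)"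
    unfolding hform_def by (simp add: cnj_sum hermitian_metric_cnj[OF assms] mult_ac)
  also have "\<dots> = hform h y x"
    unfolding hform_def by (rule sum.swap)
  finally show ?thesis .
qed

lemma hform_self_eq_0_iff:
  assumes "hermitian_metric h"
  shows "hform h v v = 0 \<longleftrightarrow> v = 0"
proof
  assume "hform h v v = 0"
  then show "v = 0"
    using assms unfolding hermitian_metric_def by fastforce
qed (simp add: hform_def)

lemma hform_self_real:
  assumes "hermitian_metric h"
  shows "hform h v v = of_real (Re (hform h v v))"
  using hform_cnj_commute[OF assms, of v v] by (metis Reals_cnj_iff of_real_Re)

lemma Re_hform_self_nonneg:
  assumes "hermitian_metric h"
  shows "Re (hform h v v) \<ge> 0"
proof (cases "v = 0")
  case False
  then show ?thesis
    using assms unfolding hermitian_metric_def by (simp add: less_imp_le)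
qed (simp add: hform_def)

lemma hermitian_metric_imp_pos_def_hermitian_on:
  assumes "hermitian_metric h"
  shows "pos_def_hermitian_on UNIV (\<lambda>i j. h$i$j)"
  unfolding pos_def_hermitian_on_def
proof (intro conjI ballI allI impI)
  fix i j
  show "h$j$i = cnj (h$i$j)" using hermitian_metric_cnj[OF assms] by simp
next
  fix x :: "'a \<Rightarrow> complex" assume "\<exists>k\<in>UNIV. x k \<noteq> 0"
  then have "vec_lambda x \<noteq> 0" by (auto simp: vec_eq_iff)
  then have "Re (hform h (vec_lambda x) (vec_lambda x)) > 0"
    using assms unfolding hermitian_metric_def by blast
  then show "Re (\<Sum>i\<in>UNIV. \<Sum>j\<in>UNIV. x i * cnj (x j) * h$i$j) > 0"
    by (simp add: hform_def)
qed

lemma hermitian_metric_factorization: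
  assumes "hermitian_metric h"
  obtains L :: "complex^'n^'n" where "\<And>x y. hform h x y = (\<Sum>m\<in>UNIV. (x v* L)$m * cnj ((y v* L)$m))"
proof -
  obtain L0 :: "'n \<Rightarrow> 'n \<Rightarrow> complex" where L0: "\<And>i j. h$i$j = (\<Sum>m\<in>UNIV. L0 i m * cnj (L0 j m))"
    using pos_def_hermitian_on_factorization[OF finite_class.finite_UNIV hermitian_metric_imp_pos_def_hermitian_on[OF assms]]
    by blast
  define L :: "complex^'n^'n" where "L = (\<chi> i m. L0 i m)"
  have "hform h x y = (\<Sum>m\<in>UNIV. (x v* L)$m * cnj ((y v* L)$m))" for x y
  proof -
    have "hform h x y = (\<Sum>i\<in>UNIV. \<Sum>j\<in>UNIV. \<Sum>m\<in>UNIV. x$i * L0 i m * (cnj (y$j) * cnj (L0 j m)))"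
      unfolding hform_def L0 by (simp add: sum_distrib_left mult_ac)
    also have "\<dots> = (\<Sum>i\<in>UNIV. \<Sum>m\<in>UNIV. \<Sum>j\<in>UNIV. x$i * L0 i m * (cnj (y$j) * cnj (L0 j m)))"
      by (rule sum.cong[OF refl], rule sum.swap)
    also have "\<dots> = (\<Sum>m\<in>UNIV. \<Sum>i\<in>UNIV. \<Sum>j\<in>UNIV. x$i * L0 i m * (cnj (y$j) * cnj (L0 j m)))"
      by (rule sum.swap)
    also have "\<dots> = (\<Sum>m\<in>UNIV. (x v* L)$m * cnj ((y v* L)$m))"
      by (simp add: L_def vector_matrix_mult_def sum_product cnj_sum mult_ac)
    finally show ?thesis .
  qed
  then show ?thesis by (rule that)
qed

lemma hermitian_metric_invertible:
  assumes "hermitian_metric h"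
  shows "invertible h"
proof -
  have "z = 0" if "h *v z = 0" for z
  proof -
    have "hform h (vec_cnj z) (vec_cnj z) = 0"
      unfolding hform_eq_sum_matrix_vector_mult using that by simp
    then show ?thesis using hform_self_eq_0_iff[OF assms] by simp
  qed
  then show ?thesis
    using invertible_left_inverse matrix_left_invertible_ker by blast
qed

lemma matrix_vector_mult_vec_cnj:
  assumes "hermitian_metric h"
  shows "h *v vec_cnj y = vec_cnj (transpose h *v y)"
  by (simp add: vec_eq_iff matrix_vector_mult_def transpose_def cnj_sum hermitian_metric_cnj[OF assms])

lemma hermitian_metric_inv_metric:
  fixes h :: "complex^'n^'n"
  assumes h: "hermitian_metric h"
  shows "hermitian_metric (inv_metric h)"
proof -
  define H where "H = transpose h"
  define G where "G = inv_metric h"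
  have HG: "H ** G = mat 1"
    using matrix_inv_inverse[OF invertible_transpose[OF hermitian_metric_invertible[OF h]]]
    unfolding G_def H_def inv_metric_def by auto
  have herm: "G$j$i = cnj (G$i$j)" for i j
  proof -
    define G' :: "complex^'n^'n" where "G' = (\<chi> i j. cnj (G$j$i))"
    have "(G' ** H)$i$j = cnj ((H ** G)$j$i)" for i j
      by (simp add: G'_def H_def matrix_matrix_mult_def transpose_def cnj_sum
          hermitian_metric_cnj[OF h] mult.commute)
    then have "G' ** H = mat 1"
      using HG by (simp add: vec_eq_iff mat_def)
    then have "G' = G"
      by (metis HG matrix_mul_assoc matrix_mul_lid matrix_mul_rid)
    then show ?thesis by (metis G'_def vec_lambda_beta)
  qed
  have pos: "Im (hform G v v) = 0 \<and> Re (hform G v v) > 0" if "v \<noteq> 0" for v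
  proof -
    \<comment> \<open>The substitution \<open>v = h (conj y)\<close> turns the inverse metric into the metric itself.\<close>
    define y where "y = G *v vec_cnj v"
    have Hy: "H *v y = vec_cnj v"
      by (simp add: y_def matrix_vector_mul_assoc HG)
    then have "h *v vec_cnj y = v"
      by (simp add: matrix_vector_mult_vec_cnj[OF h] H_def)
    then have "hform G v v = hform h y y"
      by (simp add: hform_eq_sum_matrix_vector_mult y_def mult.commute)
    moreover have "y \<noteq> 0"
      using Hy that by auto
    ultimately show ?thesis
      using h unfolding hermitian_metric_def by simp
  qed
  show ?thesis
    unfolding hermitian_metric_def G_def[symmetric] using herm pos by blast
qed

lemma exists_hform_orthogonal:
  fixes u :: "'m::finite \<Rightarrow> complex^'n"
  assumes h: "hermitian_metric h" and "vec.span (range u) \<noteq> UNIV"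
  obtains v where "v \<noteq> 0" "\<And>m. hform h (u m) v = 0"
proof -
  define A :: "complex^'n^'m" where "A = (\<chi> m. u m)"
  have "rows A = range u"
    by (auto simp: rows_def row_def A_def vec_lambda_eta)
  then obtain x where x: "A *v x = 0" "x \<noteq> 0"
    using assms(2) matrix_left_invertible_span_rows_gen[of A] matrix_left_invertible_ker[of A] by auto
  obtain B where B: "h ** B = mat 1"
    using hermitian_metric_invertible[OF h] invertible_right_inverse by blast
  define y where "y = B *v x"
  have hy: "h *v y = x"
    by (simp add: y_def matrix_vector_mul_assoc B)
  show ?thesis
  proof
    show "vec_cnj y \<noteq> 0"
      using hy x(2) by auto
    fix m
    have "hform h (u m) (vec_cnj y) = (A *v x) $ m"
      unfolding hform_eq_sum_matrix_vector_mult vec_cnj_vec_cnj hy by (simp add: A_def matrix_vector_mult_def)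
    then show "hform h (u m) (vec_cnj y) = 0"
      using x(1) by simp
  qed
qed

lemma hform_sum_self_eq_0:
  fixes v :: "'m::finite \<Rightarrow> complex^'n"
  assumes G: "hermitian_metric G" and "(\<Sum>p\<in>UNIV. hform G (v p) (v p)) = 0"
  shows "v p = 0"
proof -
  have "(\<Sum>p\<in>UNIV. Re (hform G (v p) (v p))) = 0"
    using assms(2) by (metis Re_sum zero_complex.sel(1))
  then have "Re (hform G (v p) (v p)) = 0"
    using Re_hform_self_nonneg[OF G] by (simp add: sum_nonneg_eq_0_iff)
  then have "hform G (v p) (v p) = 0"
    using hform_self_real[OF G] by (metis of_real_0)
  then show ?thesis
    using hform_self_eq_0_iff[OF G] by blast
qed

lemma tensor_square_form_eq_0:
  fixes G A :: "complex^'n^'n"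
  assumes G: "hermitian_metric G"
    and "(\<Sum>k\<in>UNIV. \<Sum>l\<in>UNIV. \<Sum>r\<in>UNIV. \<Sum>s\<in>UNIV. G$k$l * G$r$s * A$k$r * cnj (A$l$s)) = 0"
  shows "A = 0"
proof -
  obtain L :: "complex^'n^'n" where L: "\<And>x y. hform G x y = (\<Sum>m\<in>UNIV. (x v* L)$m * cnj ((y v* L)$m))"
    using hermitian_metric_factorization[OF G] by metis
  define B where "B = A ** L"
  have row_B: "A$k v* L = B$k" for k
    by (simp add: B_def vec_eq_iff vector_matrix_mult_def matrix_matrix_mult_def mult.commute)
  have "(\<Sum>k\<in>UNIV. \<Sum>l\<in>UNIV. \<Sum>r\<in>UNIV. \<Sum>s\<in>UNIV. G$k$l * G$r$s * A$k$r * cnj (A$l$s))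
      = (\<Sum>k\<in>UNIV. \<Sum>l\<in>UNIV. G$k$l * hform G (A$k) (A$l))"
    by (simp add: hform_def sum_distrib_left mult_ac)
  also have "\<dots> = (\<Sum>k\<in>UNIV. \<Sum>l\<in>UNIV. \<Sum>m\<in>UNIV. B$k$m * cnj (B$l$m) * G$k$l)"
    by (simp add: L row_B sum_distrib_left mult_ac)
  also have "\<dots> = (\<Sum>k\<in>UNIV. \<Sum>m\<in>UNIV. \<Sum>l\<in>UNIV. B$k$m * cnj (B$l$m) * G$k$l)"
    by (rule sum.cong[OF refl], rule sum.swap)
  also have "\<dots> = (\<Sum>m\<in>UNIV. hform G (column m B) (column m B))"
    by (subst sum.swap) (simp add: hform_def column_def)
  finally have "(\<Sum>m\<in>UNIV. hform G (column m B) (column m B)) = 0"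
    using assms(2) by simp
  then have "column m B = 0" for m
    by (rule hform_sum_self_eq_0[OF G])
  then have "B = 0"
    by (simp add: vec_eq_iff column_def)
  then have "hform G (A$k) (A$k) = 0" for k
    by (simp add: L row_B)
  then show "A = 0"
    using hform_self_eq_0_iff[OF G] by (simp add: vec_eq_iff)
qed

lemma sum_swap_past_4:
  "(\<Sum>i\<in>A. \<Sum>k\<in>B. \<Sum>l\<in>C. \<Sum>r\<in>D. \<Sum>s\<in>E. f i k l r s)
   = (\<Sum>k\<in>B. \<Sum>l\<in>C. \<Sum>r\<in>D. \<Sum>s\<in>E. \<Sum>i\<in>A. f i k l r s)"
proof -
  have "(\<Sum>i\<in>A. \<Sum>k\<in>B. \<Sum>l\<in>C. \<Sum>r\<in>D. \<Sum>s\<in>E. f i k l r s)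
      = (\<Sum>k\<in>B. \<Sum>i\<in>A. \<Sum>l\<in>C. \<Sum>r\<in>D. \<Sum>s\<in>E. f i k l r s)"
    by (rule sum.swap)
  also have "\<dots> = (\<Sum>k\<in>B. \<Sum>l\<in>C. \<Sum>i\<in>A. \<Sum>r\<in>D. \<Sum>s\<in>E. f i k l r s)"
    by (rule sum.cong[OF refl], rule sum.swap)
  also have "\<dots> = (\<Sum>k\<in>B. \<Sum>l\<in>C. \<Sum>r\<in>D. \<Sum>i\<in>A. \<Sum>s\<in>E. f i k l r s)"
    by (rule sum.cong[OF refl], rule sum.cong[OF refl], rule sum.swap)
  also have "\<dots> = (\<Sum>k\<in>B. \<Sum>l\<in>C. \<Sum>r\<in>D. \<Sum>s\<in>E. \<Sum>i\<in>A. f i k l r s)"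
    by (rule sum.cong[OF refl], rule sum.cong[OF refl], rule sum.cong[OF refl], rule sum.swap)
  finally show ?thesis .
qed

lemma sum_axis_mult: "(\<Sum>i\<in>UNIV. axis k (1::'a::comm_ring_1) $ i * f i) = f k"
proof -
  have "axis k 1 $ i * f i = (if i = k then f k else 0)" for i
    by (simp add: axis_def)
  then show ?thesis by simp
qed

lemma sum_hform_axis_left: "(\<Sum>i\<in>UNIV. w$i * hform h (axis i 1) y) = hform h w y"
  unfolding hform_eq_sum_matrix_vector_mult sum_axis_mult ..

lemma sum_hform_axis_right: "(\<Sum>j\<in>UNIV. cnj (w$j) * hform h x (axis j 1)) = hform h x w"
proof -
  have "hform h x (axis j 1) = (x v* h)$j" for j
  proof -
    have "(x v* h)$i * cnj (axis j 1 $ i) = (if i = j then (x v* h)$j else 0)" for i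
      by (simp add: axis_def)
    then show ?thesis unfolding hform_eq_sum_vector_matrix_mult by simp
  qed
  then show ?thesis
    by (simp add: hform_eq_sum_vector_matrix_mult mult.commute)
qed

lemma lie_br_axis: "lie_br c (axis k 1) (axis r 1) = c k r"
proof -
  have "(axis k 1 $ i * axis r 1 $ j) *s c i j = (if j = r then if i = k then c k r else 0 else 0)" for i j
    by (simp add: axis_def)
  then show ?thesis by (simp add: lie_br_def)
qed

lemma Theta_quadratic_form:
  assumes h: "hermitian_metric h"
  shows "(\<Sum>i\<in>UNIV. \<Sum>j\<in>UNIV. w$i * cnj (w$j) * Theta c h i j)
    = 1/2 * (\<Sum>k\<in>UNIV. \<Sum>l\<in>UNIV. \<Sum>r\<in>UNIV. \<Sum>s\<in>UNIV.
        inv_metric h$k$l * inv_metric h$r$s * hform h (c k r) w * cnj (hform h (c l s) w))"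
proof -
  define G where "G = inv_metric h"
  define a where "a i l s = w$i * hform h (axis i 1) (c l s)" for i l s
  define b where "b j k r = cnj (w$j) * hform h (c k r) (axis j 1)" for j k r
  define T where "T i j k l r s = G$k$l * G$r$s * (a i l s * b j k r)" for i j k l r s
  have "(\<Sum>i\<in>UNIV. \<Sum>j\<in>UNIV. w$i * cnj (w$j) * Theta c h i j)
      = 1/2 * (\<Sum>i\<in>UNIV. \<Sum>j\<in>UNIV. \<Sum>k\<in>UNIV. \<Sum>l\<in>UNIV. \<Sum>r\<in>UNIV. \<Sum>s\<in>UNIV. T i j k l r s)"
    unfolding Theta_def T_def G_def a_def b_def by (simp add: sum_distrib_left mult_ac)
  also have "(\<Sum>i\<in>UNIV. \<Sum>j\<in>UNIV. \<Sum>k\<in>UNIV. \<Sum>l\<in>UNIV. \<Sum>r\<in>UNIV. \<Sum>s\<in>UNIV. T i j k l r s)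
      = (\<Sum>i\<in>UNIV. \<Sum>k\<in>UNIV. \<Sum>l\<in>UNIV. \<Sum>r\<in>UNIV. \<Sum>s\<in>UNIV. \<Sum>j\<in>UNIV. T i j k l r s)"
    by (rule sum.cong[OF refl], rule sum_swap_past_4)
  also have "\<dots> = (\<Sum>k\<in>UNIV. \<Sum>l\<in>UNIV. \<Sum>r\<in>UNIV. \<Sum>s\<in>UNIV. \<Sum>i\<in>UNIV. \<Sum>j\<in>UNIV. T i j k l r s)"
    by (rule sum_swap_past_4)
  also have "\<dots> = (\<Sum>k\<in>UNIV. \<Sum>l\<in>UNIV. \<Sum>r\<in>UNIV. \<Sum>s\<in>UNIV.
      G$k$l * G$r$s * ((\<Sum>i\<in>UNIV. a i l s) * (\<Sum>j\<in>UNIV. b j k r)))"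
    unfolding T_def sum_product by (simp only: sum_distrib_left)
  also have "\<dots> = (\<Sum>k\<in>UNIV. \<Sum>l\<in>UNIV. \<Sum>r\<in>UNIV. \<Sum>s\<in>UNIV.
      G$k$l * G$r$s * hform h (c k r) w * cnj (hform h (c l s) w))"
  proof -
    have "(\<Sum>i\<in>UNIV. a i l s) = cnj (hform h (c l s) w)" for l s
      unfolding a_def sum_hform_axis_left by (simp add: hform_cnj_commute[OF h, of "c l s" w])
    moreover have "(\<Sum>j\<in>UNIV. b j k r) = hform h (c k r) w" for k r
      unfolding b_def sum_hform_axis_right ..
    ultimately show ?thesis by (simp add: mult_ac)
  qed
  finally show ?thesis
    unfolding G_def .
qed

lemma abelian_if_Theta_form_eq_0:
  assumes h: "hermitian_metric h"
    and Theta: "\<And>w. (\<Sum>i\<in>UNIV. \<Sum>j\<in>UNIV. w$i * cnj (w$j) * Theta c h i j) = 0"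
  shows "abelian c"
proof -
  have "hform h (c k r) w = 0" for k r w
  proof -
    have "(\<Sum>k\<in>UNIV. \<Sum>l\<in>UNIV. \<Sum>r\<in>UNIV. \<Sum>s\<in>UNIV. inv_metric h$k$l * inv_metric h$r$s
        * hform h (c k r) w * cnj (hform h (c l s) w)) = 0"
      using Theta[of w] Theta_quadratic_form[OF h, of w c] by simp
    then have "(\<chi> k r. hform h (c k r) w) = 0"
      by (intro tensor_square_form_eq_0[OF hermitian_metric_inv_metric[OF h]]) simp
    then show ?thesis
      by (simp add: vec_eq_iff)
  qed
  then have "c k r = 0" for k r
    using hform_self_eq_0_iff[OF h] by blast
  then show ?thesis
    by (simp add: abelian_def lie_br_def)
qed

lemma brackets_span_if_static_metric:
  assumes "static_metric c h" and "\<not> abelian c"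
  shows "vec.span {lie_br c x y | x y. True} = UNIV"
proof (rule ccontr)
  assume not_span: "vec.span {lie_br c x y | x y. True} \<noteq> UNIV"
  obtain lam :: real where h: "hermitian_metric h" and Theta: "\<And>i j. Theta c h i j = lam * h$i$j"
    using assms(1) unfolding static_metric_def by blast
  have Theta_form: "(\<Sum>i\<in>UNIV. \<Sum>j\<in>UNIV. w$i * cnj (w$j) * Theta c h i j) = lam * hform h w w" for w
    by (simp add: Theta hform_def sum_distrib_left mult_ac)
  have "range (\<lambda>(k, r). c k r) \<subseteq> {lie_br c x y | x y. True}"
    by (auto simp flip: lie_br_axis)
  then have "vec.span (range (\<lambda>(k, r). c k r)) \<noteq> UNIV"
    using not_span vec.span_mono by blast
  then obtain v where "v \<noteq> 0" and v_orth: "\<And>k r. hform h (c k r) v = 0"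
    using exists_hform_orthogonal[OF h] by (metis case_prod_conv)
  have "lam * hform h v v = 0"
    using Theta_form[of v] Theta_quadratic_form[OF h, of v c] by (simp add: v_orth)
  then have "lam = 0"
    using \<open>v \<noteq> 0\<close> hform_self_eq_0_iff[OF h] by simp
  then have "abelian c"
    using abelian_if_Theta_form_eq_0[OF h] Theta_form by simp
  then show False
    using assms(2) by blast
qed

lemma derived_series_eq_UNIV_if_brackets_span:
  assumes "vec.span {lie_br c x y | x y. True} = UNIV"
  shows "derived_series c k = UNIV"
  using assms by (induction k) simp_all

lemma not_solvable_if_brackets_span:
  assumes "vec.span {lie_br c x y | x y. True} = UNIV"
  shows "\<not> solvable_lie c"
proof
  assume "solvable_lie c"
  then obtain k where "derived_series c k = {0}"
    unfolding solvable_lie_def by blast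
  then have "axis undefined (1::complex) = (0 :: complex^'n)"
    using derived_series_eq_UNIV_if_brackets_span[OF assms] by blast
  then show False by simp
qed

theorem proposition2p5:
  fixes c :: "'n::finite \<Rightarrow> 'n \<Rightarrow> complex^'n"
  assumes "is_lie_algebra c"
    and "\<not> abelian c"
  shows "((\<exists>h. static_metric c h) \<longrightarrow>
            vec.span {lie_br c x y | x y. True} = UNIV)
       \<and> (solvable_lie c \<longrightarrow> \<not> (\<exists>h. static_metric c h))"
  using brackets_span_if_static_metric[OF _ assms(2)] not_solvable_if_brackets_span by blast

end
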